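(* If $\mu\in\Pr(\mathbb{T})$ satisfies $\mu\,\hat{}\,\mu=\mu$, then $\mu$ is $F$-invariant.
   Context: For $a,b\subseteq(0,1]$ put $a\,\hat{}\,b=\tfrac12 a\cup\tfrac12(b+1)$; $\mathbb{T}$ is the set generated from $\mathbf{1}=\{1\}$ by $\hat{}$ (the free binary system on one generator; each $t\neq\mathbf{1}$ is uniquely $a\,\hat{}\,b$). $\Pr(\mathbb{T})$ is the set of finitely additive probability measures on $\mathbb{T}$ (viewed as positive normalized functionals on $\ell^\infty(\mathbb{T})$), and $(\mu\,\hat{}\,\nu)(f)=\int\int f(x\,\hat{}\,y)\,d\nu(y)\,d\mu(x)$. Thompson's group $F$ has generators $x_0,x_1$ which act partially on $\mathbb{T}$ by re-association: $x_0\cdot((a\,\hat{}\,b)\,\hat{}\,c)=a\,\hat{}\,(b\,\hat{}\,c)$, defined exactly on elements of the form $(a\,\hat{}\,b)\,\hat{}\,c$, and $x_1\cdot(s\,\hat{}\,((a\,\hat{}\,b)\,\hat{}\,c))=s\,\hat{}\,(a\,\hat{}\,(b\,\hat{}\,c))$, defined exactly on elements of the form $s\,\hat{}\,((a\,\hat{}\,b)\,\hat{}\,c)$. For $E\subseteq\mathbb{T}$, $x_i\cdot E=\{x_i\cdot t: t\in E,\ x_i\cdot t \text{ defined}\}$. A measure $\mu\in\Pr(\mathbb{T})$ is $F$-invariant if $\mu(\{t:x_0\cdot t\text{ and }x_1\cdot t\text{ are defined}\})=1$ and $\mu(x_0\cdot E)=\mu(x_1\cdot E)=\mu(E)$ for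 every $E\subseteq\mathbb{T}$. *)

theory Defs
  imports Complex_Main
begin

text \<open>The free binary system on one generator: One is the generator 1,
  Hat a b is a ^ b (left half a, right half b).\<close>
datatype T = One | Hat T T

definition bdd_fun :: "(T \<Rightarrow> real) \<Rightarrow> bool" where
  "bdd_fun f \<longleftrightarrow> (\<exists>B. \<forall>x. \<bar>f x\<bar> \<le> B)"

text \<open>Finitely additive probability measures on T, viewed as positive normalized
  linear functionals on l-infinity(T); only values on bounded functions matter.\<close>
definition PrT :: "((T \<Rightarrow> real) \<Rightarrow> real) \<Rightarrow> bool" where
  "PrT \<mu> \<longleftrightarrow>
     (\<forall>f g. bdd_fun f \<longrightarrow> bdd_fun g \<longrightarrow> \<mu> (\<lambda>x. f x + g x) = \<mu> f + \<mu> g) \<and>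
     (\<forall>c f. bdd_fun f \<longrightarrow> \<mu> (\<lambda>x. c * f x) = c * \<mu> f) \<and>
     (\<forall>f. bdd_fun f \<longrightarrow> (\<forall>x. 0 \<le> f x) \<longrightarrow> 0 \<le> \<mu> f) \<and>
     \<mu> (\<lambda>_. 1) = 1"

definition conv :: "((T \<Rightarrow> real) \<Rightarrow> real) \<Rightarrow> ((T \<Rightarrow> real) \<Rightarrow> real) \<Rightarrow> (T \<Rightarrow> real) \<Rightarrow> real" where
  "conv \<mu> \<nu> f = \<mu> (\<lambda>x. \<nu> (\<lambda>y. f (Hat x y)))"

definition meas :: "((T \<Rightarrow> real) \<Rightarrow> real) \<Rightarrow> T set \<Rightarrow> real" where
  "meas \<mu> E = \<mu> (\<lambda>t. if t \<in> E then 1 else 0)"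

fun x0 :: "T \<Rightarrow> T option" where
  "x0 (Hat (Hat a b) c) = Some (Hat a (Hat b c))"
| "x0 _ = None"

fun x1 :: "T \<Rightarrow> T option" where
  "x1 (Hat s (Hat (Hat a b) c)) = Some (Hat s (Hat a (Hat b c)))"
| "x1 _ = None"

definition act :: "(T \<Rightarrow> T option) \<Rightarrow> T set \<Rightarrow> T set" where
  "act g E = {u. \<exists>t\<in>E. g t = Some u}"

definition F_invariant :: "((T \<Rightarrow> real) \<Rightarrow> real) \<Rightarrow> bool" where
  "F_invariant \<mu> \<longleftrightarrow>
     meas \<mu> {t. x0 t \<noteq> None \<and> x1 t \<noteq> None} = 1 \<and>
     (\<forall>E. meas \<mu> (act x0 E) = meas \<mu> E \<and> meas \<mu> (act x1 E) = meas \<mu> E)"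

end

theory Submission
  imports Defs
begin

text \<open>Idempotence lets one write \<open>\<mu> f\<close> as the iterated integral of \<open>f (x \<^bold>^ y)\<close>;
  splitting once more in the left or in the right slot gives two triple integrals,
  of \<open>f ((x \<^bold>^ y) \<^bold>^ z)\<close> and of \<open>f (x \<^bold>^ (y \<^bold>^ z))\<close>, both equal to \<open>\<mu> f\<close>.
  Since \<open>x\<^sub>0\<close> is exactly the re-association between these two shapes, it preserves
  \<open>\<mu>\<close>; and \<open>x\<^sub>1\<close> is \<open>x\<^sub>0\<close> acting in the right factor, so it preserves \<open>\<mu>\<close> by one
  more splitting. For the domain condition: the image of \<open>A \<times> B\<close> under \<open>\<^bold>^\<close> has
  measure \<open>\<mu>(A) \<mu>(B)\<close>, so \<open>\<mu>{1} = 0\<close> as \<open>1\<close> is not a product, and the set where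
  both \<open>x\<^sub>0\<close> and \<open>x\<^sub>1\<close> are defined is a product of sets of full measure.\<close>

lemma bdd_fun_const [simp]: "bdd_fun (\<lambda>_. c)"
  unfolding bdd_fun_def by (rule exI[of _ "\<bar>c\<bar>"]) simp

lemma bdd_fun_indicator [simp]: "bdd_fun (\<lambda>t. if P t then 1 else (0::real))"
  unfolding bdd_fun_def by (rule exI[of _ 1]) simp

lemma bdd_fun_diff: "bdd_fun f \<Longrightarrow> bdd_fun g \<Longrightarrow> bdd_fun (\<lambda>x. g x - f x)"
  unfolding bdd_fun_def by (metis abs_triangle_ineq4 add_mono order_trans)

lemma bdd_fun_comp: "bdd_fun f \<Longrightarrow> bdd_fun (\<lambda>x. f (h x))"
  unfolding bdd_fun_def by blast


lemma PrT_add: "PrT \<mu> \<Longrightarrow> bdd_fun f \<Longrightarrow> bdd_fun g \<Longrightarrow> \<mu> (\<lambda>x. f x + g x) = \<mu> f + \<mu> g"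
  and PrT_scale: "PrT \<mu> \<Longrightarrow> bdd_fun f \<Longrightarrow> \<mu> (\<lambda>x. c * f x) = c * \<mu> f"
  and PrT_nonneg: "PrT \<mu> \<Longrightarrow> bdd_fun f \<Longrightarrow> (\<And>x. 0 \<le> f x) \<Longrightarrow> 0 \<le> \<mu> f"
  and PrT_one: "PrT \<mu> \<Longrightarrow> \<mu> (\<lambda>_. 1) = 1"
  unfolding PrT_def by blast+

lemma PrT_const: "PrT \<mu> \<Longrightarrow> \<mu> (\<lambda>_. c) = c"
  using PrT_scale[of \<mu> "\<lambda>_. 1" c] PrT_one[of \<mu>] by simp

lemma PrT_mono:
  assumes "PrT \<mu>" "bdd_fun f" "bdd_fun g" "\<And>x. f x \<le> g x"
  shows "\<mu> f \<le> \<mu> g"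
proof -
  have "\<mu> g = \<mu> (\<lambda>x. f x + (g x - f x))" by simp
  also have "\<dots> = \<mu> f + \<mu> (\<lambda>x. g x - f x)"
    by (rule PrT_add[OF assms(1,2) bdd_fun_diff[OF assms(2,3)]])
  finally have "\<mu> g = \<mu> f + \<mu> (\<lambda>x. g x - f x)" .
  moreover have "0 \<le> \<mu> (\<lambda>x. g x - f x)"
    using assms by (simp add: PrT_nonneg bdd_fun_diff)
  ultimately show ?thesis by simp
qed

lemma PrT_abs_le:
  assumes "PrT \<mu>" "bdd_fun f" "\<And>x. \<bar>f x\<bar> \<le> B"
  shows "\<bar>\<mu> f\<bar> \<le> B"
proof -
  have "- B \<le> f x" "f x \<le> B" for x
    using assms(3)[of x] by linarith+
  then have "\<mu> (\<lambda>_. - B) \<le> \<mu> f" "\<mu> f \<le> \<mu> (\<lambda>_. B)"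
    using assms(1,2) by (simp_all add: PrT_mono)
  then show ?thesis using PrT_const[OF assms(1)] by (simp add: abs_le_iff)
qed

lemma bdd_fun_integral:
  assumes "PrT \<mu>" "bdd_fun f"
  shows "bdd_fun (\<lambda>x. \<mu> (\<lambda>y. f (h x y)))"
proof -
  obtain B where "\<forall>x. \<bar>f x\<bar> \<le> B" using assms(2) unfolding bdd_fun_def by blast
  then have "\<bar>\<mu> (\<lambda>y. f (h x y))\<bar> \<le> B" for x
    using assms by (intro PrT_abs_le[OF assms(1) bdd_fun_comp[OF assms(2)]]) auto
  then show ?thesis unfolding bdd_fun_def by blast
qed


lemma Hat_Hat_in_act_x0_iff: "Hat x (Hat y z) \<in> act x0 E \<longleftrightarrow> Hat (Hat x y) z \<in> E"
proof
  assume "Hat x (Hat y z) \<in> act x0 E"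
  then obtain t where "t \<in> E" "x0 t = Some (Hat x (Hat y z))" unfolding act_def by auto
  then show "Hat (Hat x y) z \<in> E" by (cases t rule: x0.cases) auto
qed (force simp: act_def)

lemma Hat_in_act_x1_iff: "Hat s w \<in> act x1 E \<longleftrightarrow> w \<in> act x0 {v. Hat s v \<in> E}"
proof
  assume "Hat s w \<in> act x1 E"
  then obtain t where "t \<in> E" "x1 t = Some (Hat s w)" unfolding act_def by auto
  then show "w \<in> act x0 {v. Hat s v \<in> E}" unfolding act_def by (cases t rule: x1.cases) auto
next
  assume "w \<in> act x0 {v. Hat s v \<in> E}"
  then obtain t where "Hat s t \<in> E" "x0 t = Some w" unfolding act_def by auto
  then show "Hat s w \<in> act x1 E" unfolding act_def
    by (cases t rule: x0.cases) (auto intro!: bexI[of _ "Hat s t"])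
qed

lemma x0_x1_defined_eq:
  "{t. x0 t \<noteq> None \<and> x1 t \<noteq> None} =
     {Hat x y | x y. x \<in> - {One} \<and> y \<in> {Hat x' y' | x' y'. x' \<in> - {One} \<and> y' \<in> UNIV}}"
proof -
  have "x0 t \<noteq> None \<longleftrightarrow> (\<exists>x y. t = Hat x y \<and> x \<noteq> One)" for t
    by (cases t rule: x0.cases) auto
  moreover have "x1 t \<noteq> None \<longleftrightarrow> (\<exists>s u. t = Hat s u \<and> x0 u \<noteq> None)" for t
    by (cases t rule: x1.cases) auto
  ultimately show ?thesis by auto
qed


locale idempotent_PrT =
  fixes \<mu> :: "(T \<Rightarrow> real) \<Rightarrow> real"
  assumes PrT: "PrT \<mu>"
    and conv_self: "\<forall>f. bdd_fun f \<longrightarrow> conv \<mu> \<mu> f = \<mu> f"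
begin

lemma integral_Hat: "bdd_fun f \<Longrightarrow> \<mu> f = \<mu> (\<lambda>x. \<mu> (\<lambda>y. f (Hat x y)))"
  using conv_self unfolding conv_def by metis

lemma integral_Hat_right_assoc:
  assumes "bdd_fun f"
  shows "\<mu> f = \<mu> (\<lambda>x. \<mu> (\<lambda>y. \<mu> (\<lambda>z. f (Hat x (Hat y z)))))"
proof -
  have "\<mu> (\<lambda>w. f (Hat x w)) = \<mu> (\<lambda>y. \<mu> (\<lambda>z. f (Hat x (Hat y z))))" for x
    using bdd_fun_comp[OF assms] by (rule integral_Hat)
  then show ?thesis using integral_Hat[OF assms] by simp
qed

lemma integral_Hat_left_assoc:
  assumes "bdd_fun f"
  shows "\<mu> f = \<mu> (\<lambda>x. \<mu> (\<lambda>y. \<mu> (\<lambda>z. f (Hat (Hat x y) z))))"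
proof -
  have "\<mu> f = \<mu> (\<lambda>u. \<mu> (\<lambda>z. f (Hat u z)))" by (rule integral_Hat[OF assms])
  also have "\<dots> = \<mu> (\<lambda>x. \<mu> (\<lambda>y. \<mu> (\<lambda>z. f (Hat (Hat x y) z))))"
    by (rule integral_Hat[OF bdd_fun_integral[OF PrT assms]])
  finally show ?thesis .
qed

lemma meas_act_x0: "meas \<mu> (act x0 E) = meas \<mu> E"
proof -
  have "meas \<mu> (act x0 E) =
      \<mu> (\<lambda>x. \<mu> (\<lambda>y. \<mu> (\<lambda>z. if Hat x (Hat y z) \<in> act x0 E then 1 else 0)))"
    unfolding meas_def by (rule integral_Hat_right_assoc) simp
  also have "\<dots> = \<mu> (\<lambda>x. \<mu> (\<lambda>y. \<mu> (\<lambda>z. if Hat (Hat x y) z \<in> E then 1 else 0)))"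
    by (simp only: Hat_Hat_in_act_x0_iff)
  also have "\<dots> = meas \<mu> E"
    unfolding meas_def by (rule integral_Hat_left_assoc[symmetric]) simp
  finally show ?thesis .
qed

lemma meas_act_x1: "meas \<mu> (act x1 E) = meas \<mu> E"
proof -
  have "meas \<mu> (act x1 E) = \<mu> (\<lambda>s. meas \<mu> (act x0 {v. Hat s v \<in> E}))"
    unfolding meas_def by (subst integral_Hat) (simp_all add: Hat_in_act_x1_iff)
  also have "\<dots> = \<mu> (\<lambda>s. meas \<mu> {v. Hat s v \<in> E})" by (simp add: meas_act_x0)
  also have "\<dots> = meas \<mu> E" unfolding meas_def by (subst (2) integral_Hat) simp_all
  finally show ?thesis .
qed

lemma meas_Hat_image:
  "meas \<mu> {Hat x y | x y. x \<in> A \<and> y \<in> B} = meas \<mu> A * meas \<mu> B"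
proof -
  have "(if Hat x y \<in> {Hat x y | x y. x \<in> A \<and> y \<in> B} then 1 else 0) =
      (if x \<in> A then 1 else 0) * (if y \<in> B then 1 else (0::real))" for x y
    by auto
  then have "meas \<mu> {Hat x y | x y. x \<in> A \<and> y \<in> B} =
      \<mu> (\<lambda>x. meas \<mu> B * (if x \<in> A then 1 else 0))"
    unfolding meas_def by (subst integral_Hat) (simp_all add: PrT_scale[OF PrT] mult.commute)
  then show ?thesis unfolding meas_def by (simp add: PrT_scale[OF PrT])
qed

lemma meas_UNIV: "meas \<mu> UNIV = 1"
  unfolding meas_def by (simp add: PrT_const[OF PrT])

lemma meas_not_One: "meas \<mu> (- {One}) = 1"
proof -
  have "- {One} = {Hat x y | x y. x \<in> UNIV \<and> y \<in> UNIV}"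
    by (auto intro: T.exhaust)
  then show ?thesis by (simp only: meas_Hat_image meas_UNIV mult_1)
qed

lemma meas_x0_x1_defined: "meas \<mu> {t. x0 t \<noteq> None \<and> x1 t \<noteq> None} = 1"
  by (simp only: x0_x1_defined_eq meas_Hat_image meas_not_One meas_UNIV mult_1)

end

theorem proposition3p3:
  assumes "PrT \<mu>"
    and "\<forall>f. bdd_fun f \<longrightarrow> conv \<mu> \<mu> f = \<mu> f"
  shows "F_invariant \<mu>"
proof -
  interpret idempotent_PrT \<mu> using assms by unfold_locales
  show ?thesis
    unfolding F_invariant_def using meas_x0_x1_defined meas_act_x0 meas_act_x1 by blast
qed

end
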